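(* Let $X$ be sufficiently large. Suppose that $\delta \ge X^{-1/10}$ and $\theta\in\mathbb{R}$ satisfy $|\widehat{g_{X,\Box}}(\theta)| \ge \delta X$. Then there exists a natural number $q\ll (\log X)^2 \delta^{-4}$ such that \[\|q\theta\|_{\mathbb{R}/\mathbb{Z}}\ll (\log X)^2 \delta^{-4} X^{-1}.\] (Implied constants may depend on the fixed function $w$.)
   Context: Fix a smooth function $w:\mathbb{R}\to[0,1]$ supported on $[-1,1]$ with $w(x)\ge 1/2$ for $x\in[-1/2,1/2]$ and $|\widehat w(t)|\ll e^{-\sqrt{|t|}}$ for all $t\in\mathbb{R}$, where $\widehat w(t)=\int_{\mathbb R}w(x)e(-tx)\,dx$ and $e(s)=e^{2\pi i s}$. Define $g_{X,\Box}:\mathbb{Z}\to\mathbb{R}$ by $g_{X,\Box}(x)=t\,w(t^2/X)$ if $|x|=t^2$ with $t\in\mathbb{N}$, and $g_{X,\Box}(x)=0$ if $|x|$ is not a square. Let $\widehat{g_{X,\Box}}(\theta)=\sum_x g_{X,\Box}(x)e(-\theta x)$. $\|\cdot\|_{\mathbb R/\mathbb Z}$ is distance to the nearest integer. *)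

theory Defs
  imports "HOL-Analysis.Analysis"
begin

definition e :: "real \<Rightarrow> complex" where
  "e s = cis (2 * pi * s)"

definition smooth_real :: "(real \<Rightarrow> real) \<Rightarrow> bool" where
  "smooth_real f \<longleftrightarrow> (\<forall>k x. ((deriv ^^ k) f) differentiable (at x))"

definition fourier :: "(real \<Rightarrow> real) \<Rightarrow> real \<Rightarrow> complex" where
  "fourier w t = (LINT x|lborel. complex_of_real (w x) * e (- t * x))"

definition g_sq :: "(real \<Rightarrow> real) \<Rightarrow> real \<Rightarrow> int \<Rightarrow> real" where
  "g_sq w X x = (if \<exists>t::nat. \<bar>x\<bar> = int (t^2)
                 then (let t = (THE t::nat. \<bar>x\<bar> = int (t^2)) in real t * w (real (t^2) / X))
                 else 0)"

definition g_sq_hat :: "(real \<Rightarrow> real) \<Rightarrow> real \<Rightarrow> real \<Rightarrow> complex" where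
  "g_sq_hat w X \<theta> = (\<Sum>\<^sub>\<infinity>x\<in>(UNIV::int set). complex_of_real (g_sq w X x) * e (- \<theta> * of_int x))"

definition dist_Z :: "real \<Rightarrow> real" where
  "dist_Z x = (INF n\<in>(UNIV::int set). \<bar>x - of_int n\<bar>)"

end

theory Submission
  imports Defs
begin

(* Write N = floor (sqrt X).  Up to complex conjugation, g_sq_hat w X theta is 2 Re S with
   S = sum_{t <= N} t w(t^2/X) e(theta t^2).  Since w is Lipschitz on [0,1], the weights
   t w(t^2/X) have total variation at most N K / 2 with K depending only on w, so partial
   summation gives M <= N with |sum_{t <= M} e(theta t^2)| >= eta N for eta = delta / K.
   Weyl differencing then yields at least eta^2 N / 2 shifts |h| < M with
   ||2 h theta|| <= 8 / (eta^2 N).  Take a Dirichlet approximation |2 k theta - a| < 2/Q with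
   k <= Q ~ eta^4 N^2: every block of k consecutive h contains O(1 + k / (eta^2 N)) such
   shifts, which forces k << eta^(-2), and q = 2k has ||q theta|| < 2/Q << delta^(-4) / X. *)

section \<open>The character e and the distance to the nearest integer\<close>

lemma e_add: "e (x + y) = e x * e y"
  unfolding e_def by (simp add: distrib_left cis_mult)

lemma e_of_int [simp]: "e (of_int n) = 1"
  unfolding e_def by (rule cis_multiple_2pi) simp

lemma norm_e [simp]: "norm (e x) = 1"
  unfolding e_def by simp

lemma cnj_e: "cnj (e x) = e (- x)"
  unfolding e_def by (simp add: cis_cnj)

lemma e_power: "e x ^ n = e (real n * x)"
proof (induction n)
  case 0
  then show ?case by (simp add: e_def)
next
  case (Suc n)
  then show ?case by (simp add: e_add[symmetric] algebra_simps)
qed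

lemma dist_Z_le: "dist_Z x \<le> \<bar>x - of_int m\<bar>"
  unfolding dist_Z_def by (rule cINF_lower) (auto intro: bdd_belowI[where m=0])

lemma dist_Z_eq_round: "dist_Z x = \<bar>x - of_int (round x)\<bar>"
proof (rule antisym)
  show "\<bar>x - of_int (round x)\<bar> \<le> dist_Z x"
    unfolding dist_Z_def by (rule cINF_greatest) (auto intro: round_diff_minimal)
qed (rule dist_Z_le)

lemma abs_sin_ge:
  fixes t :: real
  assumes t: "\<bar>t\<bar> \<le> 2"
  shows "\<bar>t\<bar> / 3 \<le> \<bar>sin t\<bar>"
proof -
  have "\<bar>sin t - t\<bar> \<le> \<bar>t\<bar> ^ 3 / 6"
    using Maclaurin_sin_bound[of t 3] by (simp add: sin_coeff_def numeral_eq_Suc fact_numeral)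
  moreover have "\<bar>t\<bar> ^ 3 \<le> 4 * \<bar>t\<bar>"
    using mult_right_mono[of "\<bar>t\<bar>^2" 4 "\<bar>t\<bar>"] t abs_square_le_1[of "t/2"]
    by (simp add: power2_eq_square power3_eq_cube abs_le_square_iff)
  ultimately show ?thesis by linarith
qed

lemma dist_Z_le_norm_e_minus_1: "dist_Z x \<le> norm (e x - 1)"
proof -
  define y where "y = x - of_int (round x)"
  have "e x = e y"
    using e_add[of y "of_int (round x)"] by (simp add: y_def)
  moreover have "norm (e y - 1) = 2 * \<bar>sin (pi * y)\<bar>"
    using dist_exp_i_1[of "2 * pi * y"] by (simp add: e_def cis_conv_exp mult.commute)
  moreover have "\<bar>y\<bar> \<le> 1/2"
    using of_int_round_abs_le[of x] by (simp add: y_def abs_minus_commute)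
  then have "\<bar>pi * y\<bar> \<le> pi / 2"
    by (simp add: abs_mult)
  then have "\<bar>pi * y\<bar> / 3 \<le> \<bar>sin (pi * y)\<bar>"
    using pi_less_4 by (intro abs_sin_ge) linarith
  moreover have "\<bar>y\<bar> \<le> 2 * (\<bar>pi * y\<bar> / 3)"
    using pi_gt3 mult_right_mono[of 3 pi "\<bar>y\<bar>"] by (simp add: abs_mult)
  ultimately show ?thesis by (simp add: dist_Z_eq_round y_def)
qed

section \<open>Linear and quadratic exponential sums\<close>

lemma norm_sum_e_le_card:
  fixes f :: "'a \<Rightarrow> real"
  shows "norm (\<Sum>t\<in>A. e (f t)) \<le> real (card A)"
  using norm_sum[of "\<lambda>t. e (f t)" A] by simp

lemma large_sum_e_bounds:
  fixes M N :: nat and f :: "nat \<Rightarrow> real"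
  assumes "M \<le> N" and "0 < \<eta> * real N" and "\<eta> * real N \<le> norm (\<Sum>t\<in>{1..M}. e (f t))"
  shows "1 \<le> M" and "\<eta> \<le> 1"
proof -
  have "\<eta> * real N \<le> real M" using assms(3) norm_sum_e_le_card[of f "{1..M}"] by simp
  then show "1 \<le> M" using assms(2) by linarith
  have "\<eta> * real N \<le> 1 * real N" using \<open>\<eta> * real N \<le> real M\<close> assms(1) by simp
  then show "\<eta> \<le> 1" using assms(2) by (simp add: mult_le_cancel_right zero_less_mult_iff)
qed

lemma norm_sum_e_linear_le:
  fixes A B :: int
  assumes "dist_Z x > 0"
  shows "norm (\<Sum>s\<in>{A..B}. e (x * of_int s)) \<le> 2 / dist_Z x"
proof (cases "A \<le> B")
  case False
  then show ?thesis using assms by simp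
next
  case True
  define n where "n = nat (B - A + 1)"
  have "{A..B} = (\<lambda>k. A + int k) ` {..<n}"
  proof (rule set_eqI, rule iffI)
    fix s assume "s \<in> {A..B}"
    then have "s = A + int (nat (s - A))" "nat (s - A) < n" by (auto simp: n_def)
    then show "s \<in> (\<lambda>k. A + int k) ` {..<n}" by blast
  qed (auto simp: n_def)
  then have "(\<Sum>s\<in>{A..B}. e (x * of_int s)) = (\<Sum>k<n. e (x * of_int (A + int k)))"
    by (simp add: sum.reindex inj_on_def)
  also have "\<dots> = e (x * of_int A) * (\<Sum>k<n. e x ^ k)"
    by (simp add: sum_distrib_left e_power e_add[symmetric] algebra_simps)
  finally have sum_eq: "(\<Sum>s\<in>{A..B}. e (x * of_int s)) = e (x * of_int A) * (\<Sum>k<n. e x ^ k)" .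
  have gap: "dist_Z x \<le> norm (e x - 1)" by (rule dist_Z_le_norm_e_minus_1)
  then have "e x \<noteq> 1" using assms by auto
  then have "norm (\<Sum>k<n. e x ^ k) = norm (1 - e x ^ n) / norm (e x - 1)"
    by (simp add: sum_gp_strict norm_divide norm_minus_commute)
  also have "\<dots> \<le> 2 / dist_Z x"
  proof (rule frac_le)
    show "norm (1 - e x ^ n) \<le> 2"
      using norm_triangle_ineq4[of 1 "e x ^ n"] by (simp add: norm_power)
  qed (use assms gap in auto)
  finally show ?thesis unfolding sum_eq by (simp add: norm_mult)
qed

lemma weyl_differencing:
  fixes M :: int and \<theta> :: real
  shows "norm (\<Sum>t\<in>{1..M}. e (\<theta> * of_int t ^ 2)) ^ 2 \<le>
    (\<Sum>h\<in>{1-M..M-1}. norm (\<Sum>s\<in>{s\<in>{1..M}. s + h \<in> {1..M}}. e ((2 * \<theta> * of_int h) * of_int s)))"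
proof -
  define I where "I = {1..M}"
  define D where "D = {1-M..M-1}"
  define Z where "Z = (\<Sum>t\<in>I. e (\<theta> * of_int t ^ 2))"
  define F where "F = (\<lambda>s t::int. e (\<theta> * (of_int t ^ 2 - of_int s ^ 2)))"
  have "Z * cnj Z = (\<Sum>s\<in>I. \<Sum>t\<in>I. F s t)"
    unfolding Z_def by (subst sum.swap) (simp add: sum_product cnj_sum F_def cnj_e e_add[symmetric] algebra_simps)
  also have "\<dots> = (\<Sum>s\<in>I. \<Sum>h\<in>D. if s + h \<in> I then F s (s + h) else 0)"
  proof (rule sum.cong[OF refl])
    fix s assume s: "s \<in> I"
    have "{h\<in>D. s + h \<in> I} = (\<lambda>t. t - s) ` I"
      using s by (force simp: I_def D_def)
    then have "(\<Sum>h\<in>D. if s + h \<in> I then F s (s + h) else 0) = (\<Sum>h\<in>(\<lambda>t. t - s) ` I. F s (s + h))"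
      by (simp add: sum.inter_filter[symmetric] D_def)
    also have "\<dots> = (\<Sum>t\<in>I. F s t)"
      by (subst sum.reindex) (auto simp: inj_on_def)
    finally show "(\<Sum>t\<in>I. F s t) = (\<Sum>h\<in>D. if s + h \<in> I then F s (s + h) else 0)" by simp
  qed
  also have "\<dots> = (\<Sum>h\<in>D. \<Sum>s\<in>{s\<in>I. s + h \<in> I}. F s (s + h))"
    by (subst sum.swap) (simp add: sum.inter_filter[symmetric] I_def)
  also have "\<dots> = (\<Sum>h\<in>D. e (\<theta> * of_int h ^ 2) * (\<Sum>s\<in>{s\<in>I. s + h \<in> I}. e ((2 * \<theta> * of_int h) * of_int s)))"
    by (simp add: sum_distrib_left F_def e_add[symmetric] power2_eq_square algebra_simps)
  finally have "norm (Z * cnj Z) \<le> (\<Sum>h\<in>D. norm (\<Sum>s\<in>{s\<in>I. s + h \<in> I}. e ((2 * \<theta> * of_int h) * of_int s)))"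
    by (metis (no_types, lifting) norm_sum norm_mult norm_e mult_1 sum.cong)
  moreover have "norm (Z * cnj Z) = norm Z ^ 2" by (simp add: norm_mult power2_eq_square)
  ultimately show ?thesis unfolding Z_def I_def D_def by linarith
qed

lemma norm_sum_e_shifted_le:
  fixes M h :: int and x :: real
  defines "T \<equiv> norm (\<Sum>s\<in>{s\<in>{1..M}. s + h \<in> {1..M}}. e (x * of_int s))"
  shows "T \<le> of_int (max 0 M)" and "dist_Z x > 0 \<Longrightarrow> T \<le> 2 / dist_Z x"
proof -
  have "T \<le> real (card {s\<in>{1..M}. s + h \<in> {1..M}})"
    unfolding T_def by (rule norm_sum_e_le_card)
  also have "\<dots> \<le> real (card {1..M})" by (intro of_nat_mono card_mono) auto
  finally show "T \<le> of_int (max 0 M)" by simp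
  have "{s\<in>{1..M}. s + h \<in> {1..M}} = {max 1 (1 - h) .. min M (M - h)}" by auto
  then show "dist_Z x > 0 \<Longrightarrow> T \<le> 2 / dist_Z x"
    unfolding T_def by (simp add: norm_sum_e_linear_le)
qed

lemma sum_le_card_split:
  fixes T :: "'a \<Rightarrow> real"
  assumes "finite D" "H \<subseteq> D" "\<And>h. h \<in> H \<Longrightarrow> T h \<le> a" "\<And>h. h \<in> D - H \<Longrightarrow> T h \<le> b" "0 \<le> b"
  shows "sum T D \<le> real (card H) * a + real (card D) * b"
proof -
  have "sum T D = sum T H + sum T (D - H)"
    using assms(1,2) by (metis sum.subset_diff add.commute)
  also have "\<dots> \<le> real (card H) * a + real (card (D - H)) * b"
    using assms(3,4) sum_bounded_above[of H T a] sum_bounded_above[of "D - H" T b] by (simp add: add_mono)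
  also have "real (card (D - H)) * b \<le> real (card D) * b"
    using assms(1,5) by (intro mult_right_mono) (auto intro: card_mono)
  finally show ?thesis by simp
qed

lemma weyl_many_small_frequencies:
  fixes M N :: int and \<theta> \<eta> :: real
  assumes M1: "1 \<le> M" and MN: "M \<le> N" and \<eta>: "\<eta> > 0"
    and large: "\<eta> * of_int N \<le> norm (\<Sum>t\<in>{1..M}. e (\<theta> * of_int t ^ 2))"
  shows "\<eta>^2 * of_int N / 2 \<le> real (card {h\<in>{1-M..M-1}. dist_Z (2 * \<theta> * of_int h) \<le> 8 / (\<eta>^2 * of_int N)})"
proof -
  define \<rho> where "\<rho> = 8 / (\<eta>^2 * of_int N)"
  define D where "D = {1-M..M-1}"
  define H where "H = {h\<in>D. dist_Z (2 * \<theta> * of_int h) \<le> \<rho>}"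
  define T where "T = (\<lambda>h. norm (\<Sum>s\<in>{s\<in>{1..M}. s + h \<in> {1..M}}. e ((2 * \<theta> * of_int h) * of_int s)))"
  have N0: "of_int N > (0::real)" using M1 MN by simp
  have \<rho>0: "\<rho> > 0" using N0 \<eta> by (simp add: \<rho>_def)
  have "(\<eta> * of_int N)^2 \<le> norm (\<Sum>t\<in>{1..M}. e (\<theta> * of_int t ^ 2)) ^ 2"
    using large \<eta> N0 by (intro power_mono) auto
  also have "\<dots> \<le> sum T D" unfolding D_def T_def by (rule weyl_differencing)
  also have "\<dots> \<le> real (card H) * of_int N + real (card D) * (2 / \<rho>)"
  proof (rule sum_le_card_split)
    show "T h \<le> of_int N" for h
      using norm_sum_e_shifted_le(1)[where x = "2 * \<theta> * of_int h" and M = M and h = h] M1 MN by (simp add: T_def)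
    show "T h \<le> 2 / \<rho>" if "h \<in> D - H" for h
    proof -
      have "\<rho> < dist_Z (2 * \<theta> * of_int h)" using that by (auto simp: H_def)
      then have "T h \<le> 2 / dist_Z (2 * \<theta> * of_int h)"
        using norm_sum_e_shifted_le(2)[where x = "2 * \<theta> * of_int h" and M = M and h = h] \<rho>0
        by (simp add: T_def)
      also have "\<dots> \<le> 2 / \<rho>"
        using \<open>\<rho> < dist_Z (2 * \<theta> * of_int h)\<close> \<rho>0 by (intro divide_left_mono) auto
      finally show ?thesis .
    qed
  qed (use \<rho>0 in \<open>auto simp: D_def H_def\<close>)
  also have "real (card D) * (2 / \<rho>) \<le> (2 * of_int N) * (2 / \<rho>)"
    using MN M1 \<rho>0 by (intro mult_right_mono) (auto simp: D_def)
  also have "(2 * of_int N) * (2 / \<rho>) = (\<eta> * of_int N)^2 / 2"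
    using N0 \<eta> by (simp add: \<rho>_def field_simps power2_eq_square)
  finally have "(\<eta>^2 * of_int N / 2) * of_int N \<le> real (card H) * of_int N"
    by (simp add: power2_eq_square algebra_simps)
  then show ?thesis using N0 by (simp add: H_def D_def \<rho>_def)
qed

section \<open>Small values of a linear phase and Dirichlet approximation\<close>

lemma card_int_ball_le:
  fixes c r :: real
  assumes "r \<ge> 0"
  shows "finite {m::int. \<bar>of_int m - c\<bar> \<le> r}" and "real (card {m::int. \<bar>of_int m - c\<bar> \<le> r}) \<le> 2 * r + 1"
proof -
  have sub: "{m::int. \<bar>of_int m - c\<bar> \<le> r} \<subseteq> {\<lceil>c - r\<rceil> .. \<lfloor>c + r\<rfloor>}"
    by (auto simp: abs_le_iff ceiling_le_iff le_floor_iff)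
  then show "finite {m::int. \<bar>of_int m - c\<bar> \<le> r}" by (rule finite_subset) simp
  have "card {m::int. \<bar>of_int m - c\<bar> \<le> r} \<le> nat (\<lfloor>c + r\<rfloor> + 1 - \<lceil>c - r\<rceil>)"
    using card_mono[OF _ sub] by simp
  moreover have "real (nat (\<lfloor>c + r\<rfloor> + 1 - \<lceil>c - r\<rceil>)) \<le> 2 * r + 1"
    using of_int_floor_le[of "c + r"] le_of_int_ceiling[of "c - r"] assms by linarith
  ultimately show "real (card {m::int. \<bar>of_int m - c\<bar> \<le> r}) \<le> 2 * r + 1"
    by (meson of_nat_le_iff order_trans)
qed

text \<open>If \<open>\<alpha>\<close> is close to \<open>a/q\<close>, the points \<open>h\<alpha>\<close> for \<open>q\<close> consecutive \<open>h\<close> are spread out like the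
  fractions \<open>j a / q\<close>, \<open>0 \<le> j < q\<close>: the map \<open>\<phi>\<close> below sends those \<open>h\<close> with \<open>\<parallel>h\<alpha>\<parallel> \<le> \<rho>\<close> injectively into an
  integer interval of length about \<open>2q\<rho>\<close>.\<close>
lemma card_small_dist_Z_in_block_le:
  fixes q a b :: int and \<alpha> \<rho> :: real
  assumes q1: "q \<ge> 1" and cop: "coprime a q" and \<beta>: "of_int (q - 1) * \<bar>of_int q * \<alpha> - of_int a\<bar> \<le> 1"
    and \<rho>: "\<rho> \<ge> 0"
  shows "real (card {h\<in>{b .. b+q-1}. dist_Z (of_int h * \<alpha>) \<le> \<rho>}) \<le> 2 * of_int q * \<rho> + 3"
proof -
  define B where "B = {h\<in>{b .. b+q-1}. dist_Z (of_int h * \<alpha>) \<le> \<rho>}"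
  define \<phi> where "\<phi> = (\<lambda>h. (h - b) * a - q * round (of_int h * \<alpha>))"
  define c where "c = - of_int q * of_int b * \<alpha>"
  define r where "r = of_int q * \<rho> + 1"
  have "inj_on \<phi> B"
  proof (rule inj_onI)
    fix h h' assume h: "h \<in> B" "h' \<in> B" and "\<phi> h = \<phi> h'"
    then have "(h - h') * a = q * (round (of_int h * \<alpha>) - round (of_int h' * \<alpha>))"
      by (simp add: \<phi>_def algebra_simps)
    then have "q dvd h - h'"
      using cop by (metis coprime_commute coprime_dvd_mult_left_iff dvd_triv_left)
    moreover have "\<bar>h - h'\<bar> < q" using h by (auto simp: B_def)
    ultimately show "h = h'"
      using dvd_imp_le_int[of "h - h'" q] by fastforce
  qed
  moreover have "\<phi> ` B \<subseteq> {m::int. \<bar>of_int m - c\<bar> \<le> r}"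
  proof safe
    fix h assume h: "h \<in> B"
    have j: "0 \<le> h - b" "h - b \<le> q - 1" using h by (auto simp: B_def)
    have "\<bar>of_int q * (of_int h * \<alpha> - of_int (round (of_int h * \<alpha>)))\<bar> \<le> of_int q * \<rho>"
      using h q1 by (auto simp: B_def dist_Z_eq_round abs_mult)
    moreover have "\<bar>of_int (h - b) * (of_int q * \<alpha> - of_int a)\<bar> \<le> 1"
    proof -
      have "of_int (h - b) * \<bar>of_int q * \<alpha> - of_int a\<bar> \<le> of_int (q - 1) * \<bar>of_int q * \<alpha> - of_int a\<bar>"
        using j by (intro mult_right_mono) auto
      then show ?thesis using j \<beta> by (simp add: abs_mult)
    qed
    moreover have "of_int (\<phi> h) = of_int q * (of_int h * \<alpha> - of_int (round (of_int h * \<alpha>))) + c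
        - of_int (h - b) * (of_int q * \<alpha> - of_int a)"
      by (simp add: \<phi>_def c_def algebra_simps)
    ultimately show "\<bar>of_int (\<phi> h) - c\<bar> \<le> r" by (simp add: r_def)
  qed
  moreover have "r \<ge> 0" using \<rho> q1 by (simp add: r_def)
  ultimately have "card B \<le> card {m::int. \<bar>of_int m - c\<bar> \<le> r}"
    by (metis card_image card_mono card_int_ball_le(1))
  then have "real (card B) \<le> 2 * r + 1"
    using card_int_ball_le(2)[OF \<open>r \<ge> 0\<close>, of c] by linarith
  then show ?thesis by (simp add: B_def r_def)
qed

lemma card_small_dist_Z_le:
  fixes N q a :: int and \<alpha> \<rho> :: real and H :: "int set"
  assumes N0: "N \<ge> 0" and q1: "q \<ge> 1" and cop: "coprime a q"
    and \<beta>: "of_int (q - 1) * \<bar>of_int q * \<alpha> - of_int a\<bar> \<le> 1"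
    and \<rho>: "\<rho> \<ge> 0" and HN: "H \<subseteq> {-N..N}" and small: "\<And>h. h \<in> H \<Longrightarrow> dist_Z (of_int h * \<alpha>) \<le> \<rho>"
  shows "real (card H) \<le> (2 * of_int N / of_int q + 2) * (2 * of_int q * \<rho> + 3)"
proof -
  define U where "U = {- (N div q) - 1 .. N div q}"
  define B where "B = (\<lambda>u. {h\<in>{u*q .. u*q+q-1}. dist_Z (of_int h * \<alpha>) \<le> \<rho>})"
  have "H \<subseteq> (\<Union>u\<in>U. B u)"
  proof
    fix h assume h: "h \<in> H"
    have "(h div q) * q \<le> h" "h \<le> (h div q) * q + q - 1"
      using q1 div_mod_decomp_int[of h q] pos_mod_bound[of q h] pos_mod_sign[of q h] by linarith+
    moreover have "-N \<le> h" "h \<le> N" using h HN by auto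
    then have "h div q \<le> N div q" "(- N) div q \<le> h div q" using q1 by (simp_all add: zdiv_mono1)
    moreover have "- (N div q) - 1 \<le> (- N) div q" using q1 by (simp add: zdiv_zminus1_eq_if)
    ultimately show "h \<in> (\<Union>u\<in>U. B u)" using h small by (auto simp: U_def B_def)
  qed
  moreover have "finite (B u)" for u
    unfolding B_def by (rule finite_subset[of _ "{u*q .. u*q+q-1}"]) auto
  ultimately have "card H \<le> card (\<Union>u\<in>U. B u)"
    by (intro card_mono) (simp_all add: U_def)
  also have "\<dots> \<le> (\<Sum>u\<in>U. card (B u))" by (rule card_UN_le) (simp add: U_def)
  finally have "real (card H) \<le> (\<Sum>u\<in>U. real (card (B u)))" by (simp flip: of_nat_sum)
  also have "\<dots> \<le> real (card U) * (2 * of_int q * \<rho> + 3)"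
    using sum_bounded_above[of U "\<lambda>u. real (card (B u))"] card_small_dist_Z_in_block_le[OF q1 cop \<beta> \<rho>]
    by (simp add: B_def)
  also have "\<dots> \<le> (2 * of_int N / of_int q + 2) * (2 * of_int q * \<rho> + 3)"
  proof (rule mult_right_mono)
    have "real (card U) = 2 * of_int (N div q) + 2"
      using N0 q1 by (simp add: U_def pos_imp_zdiv_nonneg_iff)
    then show "real (card U) \<le> 2 * of_int N / of_int q + 2"
      using real_of_int_div4[of N q] by simp
  qed (use \<rho> q1 in simp)
  finally show ?thesis .
qed

lemma sum_nat_interval_as_int:
  fixes f :: "int \<Rightarrow> 'a::comm_monoid_add"
  shows "(\<Sum>t\<in>{1..int M}. f t) = (\<Sum>t\<in>{1..M}. f (int t))"
proof -
  have "{1..int M} = int ` {1..M}" by (simp add: image_int_atLeastAtMost)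
  then show ?thesis by (simp add: sum.reindex)
qed

lemma Dirichlet_approx_coprime_real:
  fixes \<alpha> Q :: real
  assumes Q: "2 \<le> Q"
  obtains a k :: int where "coprime a k" "0 < k" "of_int k \<le> Q"
    "of_int (k - 1) * \<bar>of_int k * \<alpha> - of_int a\<bar> \<le> 1" "\<bar>of_int k * \<alpha> - of_int a\<bar> < 2 / Q"
proof -
  define Q' where "Q' = nat \<lfloor>Q\<rfloor>"
  have Q': "Q' > 0" "Q / 2 \<le> real Q'" "real Q' \<le> Q"
    using Q unfolding Q'_def by linarith+
  obtain a k where cop: "coprime a k" and k: "0 < k" "of_int k \<le> real Q'"
    and approx: "\<bar>of_int k * \<alpha> - of_int a\<bar> < 1 / real Q'"
    using Dirichlet_approx_coprime[OF Q'(1)] by (metis of_int_le_iff of_int_of_nat_eq)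
  show ?thesis
  proof (rule that[OF cop k(1)])
    show "of_int k \<le> Q" using k(2) Q'(3) by linarith
    have "of_int (k - 1) * \<bar>of_int k * \<alpha> - of_int a\<bar> \<le> real Q' * (1 / real Q')"
      using k approx by (intro mult_mono) auto
    then show "of_int (k - 1) * \<bar>of_int k * \<alpha> - of_int a\<bar> \<le> 1" using Q'(1) by simp
    have "1 / real Q' \<le> 2 / Q" using Q Q' by (simp add: field_simps)
    then show "\<bar>of_int k * \<alpha> - of_int a\<bar> < 2 / Q" using approx by linarith
  qed
qed

lemma denominator_bound_from_counts:
  fixes \<eta> n k :: real
  assumes \<eta>: "0 < \<eta>" "\<eta> \<le> 1" and n: "512 \<le> \<eta>^4 * n" and k: "1 \<le> k" "k \<le> \<eta>^4 * n^2 / 1024"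
    and counts: "\<eta>^2 * n / 2 \<le> (2 * n / k + 2) * (2 * k * (8 / (\<eta>^2 * n)) + 3)"
  shows "k \<le> 16 / \<eta>^2"
proof -
  have "0 < \<eta>^4 * n" using n by linarith
  then have n0: "n > 0" using \<eta> by (simp add: zero_less_mult_iff)
  have "\<eta>^4 \<le> \<eta>^2" using \<eta> by (simp add: power_decreasing)
  then have "\<eta>^4 * n \<le> \<eta>^2 * n" using n0 by (intro mult_right_mono) auto
  then have \<eta>2n: "512 \<le> \<eta>^2 * n" using n by linarith
  have "(2 * n / k + 2) * (2 * k * (8 / (\<eta>^2 * n)) + 3) = 32 / \<eta>^2 + 6 * n / k + 32 * k / (\<eta>^2 * n) + 6"
    using k n0 \<eta> by (simp add: field_simps)
  moreover have "32 / \<eta>^2 \<le> \<eta>^2 * n / 16"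
    using n \<eta> by (simp add: field_simps power4_eq_xxxx power2_eq_square)
  moreover have "32 * k / (\<eta>^2 * n) \<le> \<eta>^2 * n / 32"
    using k n0 \<eta> by (simp add: field_simps power4_eq_xxxx power2_eq_square)
  ultimately have "\<eta>^2 * n * (3/8) \<le> 6 * n / k" using counts \<eta>2n by linarith
  then have "\<eta>^2 * k \<le> 16" using k n0 by (simp add: field_simps)
  then show ?thesis using \<eta> by (simp add: field_simps)
qed

theorem large_quadratic_weyl_sum_imp_dist_Z_small:
  fixes M N :: nat and \<theta> \<eta> :: real
  assumes MN: "M \<le> N" and \<eta>: "\<eta> > 0" and N: "512 \<le> \<eta>^4 * real N"
    and large: "\<eta> * real N \<le> norm (\<Sum>t\<in>{1..M}. e (\<theta> * real t ^ 2))"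
  shows "\<exists>q::nat. q > 0 \<and> real q \<le> 32 / \<eta>^2 \<and> dist_Z (real q * \<theta>) \<le> 2048 / (\<eta>^4 * real N ^ 2)"
proof -
  define n where "n = real N"
  have "0 < \<eta>^4 * n" using N by (simp add: n_def)
  then have n0: "n > 0" using \<eta> by (simp add: zero_less_mult_iff)
  then have M1: "1 \<le> M" and \<eta>1: "\<eta> \<le> 1"
    using large_sum_e_bounds[OF MN _ large] \<eta> by (simp_all add: n_def)
  define \<rho> where "\<rho> = 8 / (\<eta>^2 * n)"
  define H where "H = {h\<in>{1 - int M..int M - 1}. dist_Z (2 * \<theta> * of_int h) \<le> \<rho>}"
  have "\<eta> * of_int (int N) \<le> norm (\<Sum>t\<in>{1..int M}. e (\<theta> * of_int t ^ 2))"
    using large by (simp add: sum_nat_interval_as_int)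
  then have card_lower: "\<eta>^2 * n / 2 \<le> real (card H)"
    using weyl_many_small_frequencies[of "int M" "int N" \<eta> \<theta>] M1 MN \<eta> by (simp add: H_def \<rho>_def n_def)
  define Q where "Q = \<eta>^4 * n^2 / 1024"
  have "\<eta>^4 * n \<le> 1 * n" using \<eta> \<eta>1 n0 by (intro mult_right_mono) (auto simp: power_le_one)
  then have "512 * 512 \<le> (\<eta>^4 * n) * n" using N by (intro mult_mono) (auto simp: n_def)
  then have "2 \<le> Q" by (simp add: Q_def power2_eq_square algebra_simps)
  then obtain a k where cop: "coprime a k" and k: "0 < k" "of_int k \<le> Q"
    and \<beta>: "of_int (k - 1) * \<bar>of_int k * (2 * \<theta>) - of_int a\<bar> \<le> 1"
    and approx: "\<bar>of_int k * (2 * \<theta>) - of_int a\<bar> < 2 / Q"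
    by (rule Dirichlet_approx_coprime_real)
  have "H \<subseteq> {- int N..int N}" using MN by (auto simp: H_def)
  then have card_upper: "real (card H) \<le> (2 * n / of_int k + 2) * (2 * of_int k * \<rho> + 3)"
    using card_small_dist_Z_le[of "int N" k a "2 * \<theta>" \<rho> H] \<beta> k cop \<eta> n0
    by (auto simp: H_def n_def \<rho>_def coprime_commute mult.commute)
  have "of_int k \<le> 16 / \<eta>^2"
    using denominator_bound_from_counts[of \<eta> n "of_int k"] \<eta> \<eta>1 N k card_lower card_upper
    by (simp add: n_def \<rho>_def Q_def)
  moreover have "dist_Z (real (nat (2 * k)) * \<theta>) \<le> 2 / Q"
    using dist_Z_le[of "of_int k * (2 * \<theta>)" a] approx k by (simp add: mult.assoc mult.left_commute)
  ultimately show ?thesis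
    using k by (intro exI[of _ "nat (2 * k)"]) (simp add: n_def Q_def)
qed

section \<open>From the weighted sum over squares to a Weyl sum\<close>

lemma smooth_real_lipschitz_on:
  assumes "smooth_real w"
  shows "\<exists>L. L-lipschitz_on {a..b} w"
proof -
  have "w differentiable (at x)" for x
    using assms[unfolded smooth_real_def, rule_format, of 0 x] by simp
  then have "(w has_real_derivative deriv w x) (at x)" for x
    by (simp add: DERIV_deriv_iff_real_differentiable)
  then have der: "(w has_derivative (*) (deriv w x)) (at x within {a..b})" for x
    by (blast intro: has_derivative_at_withinI has_field_derivative_imp_has_derivative)
  have "deriv w differentiable (at x)" for x
    using assms[unfolded smooth_real_def, rule_format, of 1 x] by simp
  then have "continuous_on {a..b} (deriv w)"
    by (intro continuous_at_imp_continuous_on) (auto intro: differentiable_imp_continuous_within)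
  then have "bounded (deriv w ` {a..b})"
    by (intro compact_imp_bounded compact_continuous_image compact_Icc)
  then obtain L where "L > 0" and L: "\<And>x. x \<in> {a..b} \<Longrightarrow> norm (deriv w x) \<le> L"
    unfolding bounded_pos by blast
  have "L-lipschitz_on {a..b} w"
  proof (rule bounded_derivative_imp_lipschitz[OF der])
    show "onorm ((*) (deriv w x)) \<le> L" if "x \<in> {a..b}" for x
      using L[OF that] by (intro onorm_le) (simp add: abs_mult mult_right_mono)
  qed (use \<open>L > 0\<close> in auto)
  then show ?thesis ..
qed

lemma g_sq_eq:
  assumes "\<bar>x\<bar> = int t ^ 2"
  shows "g_sq w X x = real t * w (real t ^ 2 / X)"
proof -
  have "(THE s::nat. \<bar>x\<bar> = int (s^2)) = t"
    using assms by (intro the_equality) (simp_all add: power2_eq_iff_nonneg)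
  then show ?thesis using assms by (auto simp: g_sq_def Let_def)
qed

lemma g_sq_hat_eq_cnj_add:
  fixes N :: nat and \<theta> :: real
  assumes X: "X > 0" and supp: "\<And>x. \<bar>x\<bar> > 1 \<Longrightarrow> w x = 0" and N: "X < (real N + 1)^2"
  defines "S \<equiv> (\<Sum>t\<in>{1..N}. (real t * w (real t ^ 2 / X)) *\<^sub>R e (\<theta> * real t ^ 2))"
  shows "g_sq_hat w X \<theta> = cnj S + S"
proof -
  define f where "f = (\<lambda>x::int. complex_of_real (g_sq w X x) * e (- \<theta> * of_int x))"
  define P where "P = (\<lambda>t::nat. int t ^ 2) ` {1..N}"
  define P' where "P' = (\<lambda>t::nat. - (int t ^ 2)) ` {1..N}"
  have "f x = 0" if x: "x \<notin> P \<union> P'" for x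
  proof (cases "\<exists>t::nat. \<bar>x\<bar> = int t ^ 2")
    case False
    then show ?thesis by (simp add: f_def g_sq_def)
  next
    case True
    then obtain t :: nat where t: "\<bar>x\<bar> = int t ^ 2" by blast
    then have "x = int t ^ 2 \<or> x = - (int t ^ 2)" by (cases "x \<ge> 0") auto
    then have "t \<notin> {1..N}" using x by (auto simp: P_def P'_def)
    then have "t = 0 \<or> t > N" by auto
    moreover have "w (real t ^ 2 / X) = 0" if "t > N"
    proof -
      have "(real N + 1)^2 \<le> real t ^ 2" using that by (intro power_mono) auto
      then have "X < real t ^ 2" using N by linarith
      then have "1 < real t ^ 2 / X" using X by simp
      then show ?thesis using X by (intro supp) simp
    qed
    ultimately show ?thesis by (auto simp: f_def g_sq_eq[OF t])
  qed
  then have "infsum f UNIV = infsum f (P \<union> P')"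
    by (intro infsum_cong_neutral) auto
  then have "g_sq_hat w X \<theta> = sum f (P \<union> P')"
    by (simp add: g_sq_hat_def f_def P_def P'_def)
  also have "\<dots> = sum f P + sum f P'"
  proof (rule sum.union_disjoint)
    have "P \<subseteq> {0<..}" "P' \<subseteq> {..<0}" by (auto simp: P_def P'_def)
    then show "P \<inter> P' = {}" by fastforce
  qed (simp_all add: P_def P'_def)
  also have "sum f P = cnj S"
    unfolding P_def S_def
    by (subst sum.reindex) (auto simp: inj_on_def f_def g_sq_eq cnj_sum cnj_e scaleR_conv_of_real)
  also have "sum f P' = S"
    unfolding P'_def S_def
    by (subst sum.reindex) (auto simp: inj_on_def f_def g_sq_eq scaleR_conv_of_real)
  finally show ?thesis .
qed

lemma sum_scaleR_by_parts:
  fixes a :: "nat \<Rightarrow> real" and z :: "nat \<Rightarrow> 'a::real_vector"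
  shows "(\<Sum>t\<in>{1..n}. a t *\<^sub>R z t) =
    a n *\<^sub>R (\<Sum>s\<in>{1..n}. z s) + (\<Sum>t\<in>{1..<n}. (a t - a (Suc t)) *\<^sub>R (\<Sum>s\<in>{1..t}. z s))"
proof (induction n)
  case (Suc n)
  show ?case
  proof (cases "n = 0")
    case False
    then have "{1..<Suc n} = insert n {1..<n}" by auto
    then show ?thesis
      using Suc by (simp add: algebra_simps scaleR_right_distrib scaleR_left_diff_distrib)
  qed simp
qed simp

lemma norm_sum_scaleR_le_variation:
  fixes a :: "nat \<Rightarrow> real" and z :: "nat \<Rightarrow> 'a::real_normed_vector"
  assumes partial: "\<And>k. k \<le> n \<Longrightarrow> norm (\<Sum>s\<in>{1..k}. z s) \<le> B"
  shows "norm (\<Sum>t\<in>{1..n}. a t *\<^sub>R z t) \<le> (\<bar>a n\<bar> + (\<Sum>t\<in>{1..<n}. \<bar>a t - a (Suc t)\<bar>)) * B"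
proof -
  have "norm (\<Sum>t\<in>{1..<n}. (a t - a (Suc t)) *\<^sub>R (\<Sum>s\<in>{1..t}. z s)) \<le>
      (\<Sum>t\<in>{1..<n}. \<bar>a t - a (Suc t)\<bar> * norm (\<Sum>s\<in>{1..t}. z s))"
    using norm_sum[of "\<lambda>t. (a t - a (Suc t)) *\<^sub>R (\<Sum>s\<in>{1..t}. z s)" "{1..<n}"] by simp
  then have "norm (\<Sum>t\<in>{1..n}. a t *\<^sub>R z t) \<le>
      \<bar>a n\<bar> * norm (\<Sum>s\<in>{1..n}. z s) + (\<Sum>t\<in>{1..<n}. \<bar>a t - a (Suc t)\<bar> * norm (\<Sum>s\<in>{1..t}. z s))"
    unfolding sum_scaleR_by_parts by (intro norm_triangle_le) simp
  also have "\<dots> \<le> \<bar>a n\<bar> * B + (\<Sum>t\<in>{1..<n}. \<bar>a t - a (Suc t)\<bar> * B)"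
    using partial by (intro add_mono sum_mono mult_left_mono) auto
  finally show ?thesis by (simp add: distrib_right sum_distrib_right)
qed

lemma weight_increment_le:
  fixes w :: "real \<Rightarrow> real" and t :: nat
  assumes lip: "L-lipschitz_on {0..1} w" and w01: "\<And>x. 0 \<le> w x \<and> w x \<le> 1"
    and X: "X > 0" and t: "t \<ge> 1" "real (Suc t) ^ 2 \<le> X"
  shows "\<bar>real t * w (real t ^ 2 / X) - real (Suc t) * w (real (Suc t) ^ 2 / X)\<bar> \<le> 3 * L + 1"
proof -
  define u where "u = real t ^ 2 / X"
  define v where "v = real (Suc t) ^ 2 / X"
  have "real t ^ 2 \<le> real (Suc t) ^ 2" by (intro power_mono) auto
  then have tX: "real t ^ 2 \<le> X" using t by linarith
  then have uv: "u \<in> {0..1}" "v \<in> {0..1}" using t X by (auto simp: u_def v_def)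
  have "\<bar>w u - w v\<bar> \<le> L * \<bar>u - v\<bar>"
    using lipschitz_onD[OF lip uv] by (simp add: dist_real_def)
  also have "\<bar>u - v\<bar> = (2 * real t + 1) / X"
    using X by (simp add: u_def v_def field_simps power2_eq_square)
  finally have "real t * \<bar>w u - w v\<bar> \<le> L * ((2 * real t ^ 2 + real t) / X)"
    using mult_left_mono[of _ _ "real t"] by (fastforce simp: field_simps power2_eq_square)
  also have "\<dots> \<le> L * 3"
  proof (rule mult_left_mono)
    have "real t \<le> real t ^ 2" using t by (simp add: power2_eq_square)
    then have "2 * real t ^ 2 + real t \<le> 3 * X" using tX by linarith
    then show "(2 * real t ^ 2 + real t) / X \<le> 3" using X by (simp add: divide_le_eq)
  qed (rule lipschitz_on_nonneg[OF lip])
  finally have "\<bar>real t * (w u - w v) - w v\<bar> \<le> 3 * L + 1"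
    using w01[of v] abs_triangle_ineq4[of "real t * (w u - w v)" "w v"] by (simp add: abs_mult)
  then show ?thesis by (simp add: u_def v_def algebra_simps)
qed

lemma weight_variation_le:
  fixes w :: "real \<Rightarrow> real" and N :: nat
  assumes lip: "L-lipschitz_on {0..1} w" and w01: "\<And>x. 0 \<le> w x \<and> w x \<le> 1"
    and X: "X > 0" and N: "real N ^ 2 \<le> X"
  defines "a \<equiv> \<lambda>t::nat. real t * w (real t ^ 2 / X)"
  shows "\<bar>a N\<bar> + (\<Sum>t\<in>{1..<N}. \<bar>a t - a (Suc t)\<bar>) \<le> real N * (3 * L + 2)"
proof -
  have "\<bar>a N\<bar> \<le> real N"
    using w01[of "real N ^ 2 / X"] by (simp add: a_def abs_mult mult_left_le)
  moreover have "(\<Sum>t\<in>{1..<N}. \<bar>a t - a (Suc t)\<bar>) \<le> (\<Sum>t\<in>{1..<N}. 3 * L + 1)"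
  proof (rule sum_mono)
    fix t assume t: "t \<in> {1..<N}"
    then have "real (Suc t) ^ 2 \<le> real N ^ 2" by (intro power_mono) auto
    then have "real (Suc t) ^ 2 \<le> X" using N by linarith
    then show "\<bar>a t - a (Suc t)\<bar> \<le> 3 * L + 1"
      using weight_increment_le[OF lip w01 X] t by (simp add: a_def)
  qed
  moreover have "(\<Sum>t\<in>{1..<N}. 3 * L + 1) \<le> real N * (3 * L + 1)"
    using lipschitz_on_nonneg[OF lip] by (simp add: mult_right_mono)
  ultimately show ?thesis by (simp add: algebra_simps)
qed

lemma large_g_sq_hat_imp_large_weyl_sum:
  fixes w :: "real \<Rightarrow> real" and N :: nat
  assumes lip: "L-lipschitz_on {0..1} w" and w01: "\<And>x. 0 \<le> w x \<and> w x \<le> 1"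
    and supp: "\<And>x. \<bar>x\<bar> > 1 \<Longrightarrow> w x = 0"
    and X: "X > 0" and N: "real N ^ 2 \<le> X" "X < (real N + 1)^2"
    and large: "\<delta> * X \<le> norm (g_sq_hat w X \<theta>)"
  shows "\<exists>M\<le>N. \<delta> / (2 * (3 * L + 2)) * real N \<le> norm (\<Sum>t\<in>{1..M}. e (\<theta> * real t ^ 2))"
proof -
  define a where "a = (\<lambda>t::nat. real t * w (real t ^ 2 / X))"
  define S where "S = (\<Sum>t\<in>{1..N}. a t *\<^sub>R e (\<theta> * real t ^ 2))"
  define Z where "Z = (\<lambda>k. norm (\<Sum>t\<in>{1..k}. e (\<theta> * real t ^ 2)))"
  have "g_sq_hat w X \<theta> = cnj S + S"
    unfolding S_def a_def using X supp N(2) by (rule g_sq_hat_eq_cnj_add)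
  then have "norm (g_sq_hat w X \<theta>) \<le> 2 * norm S"
    using norm_triangle_ineq[of "cnj S" S] by simp
  moreover have "\<delta> * real N ^ 2 \<le> \<delta> * X \<or> \<delta> * real N ^ 2 \<le> 0"
    using N(1) by (cases "\<delta> \<ge> 0") (auto intro: mult_left_mono simp: mult_nonpos_nonneg)
  ultimately have S_lower: "\<delta> * real N ^ 2 \<le> 2 * norm S"
    using large norm_ge_zero[of S] by linarith
  obtain M where M: "M \<le> N" "\<And>k. k \<le> N \<Longrightarrow> Z k \<le> Z M"
  proof -
    have "Max (Z ` {..N}) \<in> Z ` {..N}" by (intro Max_in) auto
    then obtain M where "M \<le> N" and M: "Z M = Max (Z ` {..N})" by (metis atMost_iff imageE)
    have "Z k \<le> Z M" if "k \<le> N" for k unfolding M using that by (intro Max_ge) auto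
    with \<open>M \<le> N\<close> show ?thesis by (rule that)
  qed
  have "norm S \<le> (\<bar>a N\<bar> + (\<Sum>t\<in>{1..<N}. \<bar>a t - a (Suc t)\<bar>)) * Z M"
    unfolding S_def using M(2) by (intro norm_sum_scaleR_le_variation) (simp add: Z_def)
  also have "\<dots> \<le> real N * (3 * L + 2) * Z M"
    using weight_variation_le[OF lip w01 X N(1)] by (intro mult_right_mono) (simp_all add: a_def Z_def)
  finally have "real N * (\<delta> * real N) \<le> real N * (2 * (3 * L + 2) * Z M)"
    using S_lower by (simp add: power2_eq_square algebra_simps)
  then have "\<delta> * real N \<le> 2 * (3 * L + 2) * Z M \<or> N = 0"
    by (auto simp only: mult_le_cancel_left_pos of_nat_0_less_iff)
  moreover have "0 < 3 * L + 2" using lipschitz_on_nonneg[OF lip] by simp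
  ultimately show ?thesis
    using M(1) by (intro exI[of _ M]) (auto simp: Z_def field_simps)
qed

section \<open>Choice of parameters\<close>

lemma nat_floor_sqrt_bounds:
  fixes X :: real
  assumes X: "X \<ge> 4"
  defines "N \<equiv> nat \<lfloor>sqrt X\<rfloor>"
  shows "real N ^ 2 \<le> X" and "X < (real N + 1)^2" and "sqrt X / 2 \<le> real N" and "X \<le> 4 * real N ^ 2"
proof -
  have "2 \<le> sqrt X" using real_sqrt_le_mono[OF X] by simp
  have "0 \<le> \<lfloor>sqrt X\<rfloor>" using X by simp
  then have "real N = of_int \<lfloor>sqrt X\<rfloor>" by (simp add: N_def)
  then have N: "real N \<le> sqrt X" "sqrt X < real N + 1"
    by (simp_all add: of_int_floor_le)
  show "real N ^ 2 \<le> X" using N(1) power_mono[OF N(1), of 2] X by simp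
  show "X < (real N + 1)^2" using N(2) power_strict_mono[OF N(2), of 2] X by simp
  show half: "sqrt X / 2 \<le> real N" using N(2) \<open>2 \<le> sqrt X\<close> by linarith
  show "X \<le> 4 * real N ^ 2" using power_mono[OF half, of 2] X by (simp add: power_divide)
qed

lemma rescaled_delta_pow4_mul_ge:
  fixes K X \<delta> :: real and N :: nat
  assumes K: "K > 0" and X: "(1024 * K^4) powr 10 \<le> X" and \<delta>: "X powr (-1/10) \<le> \<delta>"
    and N: "sqrt X / 2 \<le> real N"
  shows "512 \<le> (\<delta> / K)^4 * real N"
proof -
  have "0 < (1024 * K^4) powr 10" using K by simp
  then have X0: "X > 0" using X by linarith
  have "X powr (-2/5) \<le> \<delta>^4"
    using power_mono[OF \<delta>, of 4] X0 by (simp add: powr_power)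
  then have "X powr (-2/5) * (X powr (1/2) / 2) \<le> \<delta>^4 * real N"
    using N X0 by (intro mult_mono) (auto simp: powr_half_sqrt)
  moreover have "X powr (-2/5) * (X powr (1/2) / 2) = X powr (1/10) / 2"
    using X0 by (simp add: powr_add[symmetric])
  moreover have "((1024 * K^4) powr 10) powr (1/10) \<le> X powr (1/10)"
    using X K by (intro powr_mono2) auto
  moreover have "((1024 * K^4) powr 10) powr (1/10) = 1024 * K^4"
    using K by (simp only: powr_powr) simp
  ultimately have "512 * K^4 \<le> \<delta>^4 * real N" by linarith
  then show ?thesis using K by (simp add: power_divide field_simps)
qed

lemma rescaled_bounds_le:
  fixes K X \<delta> q d :: real and N :: nat
  assumes K: "K \<ge> 1" and \<delta>: "0 < \<delta>" "\<delta> \<le> K" and X: "exp 1 \<le> X" and N: "X \<le> 4 * real N ^ 2"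
    and q: "q \<le> 32 / (\<delta> / K)^2" and d: "d \<le> 2048 / ((\<delta> / K)^4 * real N ^ 2)"
  shows "q \<le> 8192 * K^4 * (ln X)^2 * \<delta> powr (-4)" and "d \<le> 8192 * K^4 * (ln X)^2 * \<delta> powr (-4) / X"
proof -
  have X0: "0 < X" using X exp_gt_zero[of 1] by linarith
  then have "1 \<le> ln X" using X by (simp add: ln_ge_iff)
  then have ln: "1 \<le> (ln X)^2" by (simp add: one_le_power)
  have \<delta>4: "\<delta> powr (-4) = 1 / \<delta>^4" using \<delta> by (simp add: powr_minus powr_realpow divide_inverse)
  have "K^2 * \<delta>^2 \<le> K^2 * K^2" using \<delta> by (intro mult_left_mono power_mono) auto
  then have "K^2 * \<delta>^2 \<le> K^4" by (simp add: power_add[symmetric])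
  moreover have "0 \<le> K^4" using K by simp
  ultimately have "32 * K^2 * \<delta>^2 \<le> 8192 * K^4" by linarith
  moreover have "32 / (\<delta> / K)^2 = 32 * K^2 * \<delta>^2 / \<delta>^4"
    using \<delta> K by (simp add: power_divide field_simps eval_nat_numeral)
  ultimately have "q \<le> 8192 * K^4 / \<delta>^4"
    using q \<delta> divide_right_mono[of "32 * K^2 * \<delta>^2" "8192 * K^4" "\<delta>^4"] by simp
  also have lnX_factor: "\<dots> \<le> 8192 * K^4 * (ln X)^2 * \<delta> powr (-4)"
    using ln \<delta> \<delta>4 by (simp add: divide_right_mono)
  finally show "q \<le> 8192 * K^4 * (ln X)^2 * \<delta> powr (-4)" .
  have "N > 0" using N X0 by (intro gr0I) auto
  have "d \<le> 2048 * K^4 / (\<delta>^4 * real N ^ 2)"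
    using d \<delta> K by (simp add: power_divide)
  also have "\<dots> \<le> 2048 * K^4 / (\<delta>^4 * (X / 4))"
    using N \<delta> K X0 \<open>N > 0\<close> by (intro divide_left_mono mult_left_mono mult_pos_pos) auto
  also have "\<dots> = 8192 * K^4 / \<delta>^4 / X" by (simp add: field_simps)
  also have "\<dots> \<le> 8192 * K^4 * (ln X)^2 * \<delta> powr (-4) / X"
    using X0 by (intro divide_right_mono[OF lnX_factor]) simp
  finally show "d \<le> 8192 * K^4 * (ln X)^2 * \<delta> powr (-4) / X" .
qed

theorem lemma5p4:
  fixes w :: "real \<Rightarrow> real"
  assumes smooth: "smooth_real w"
    and range01: "\<And>x. 0 \<le> w x \<and> w x \<le> 1"
    and supp: "\<And>x. \<bar>x\<bar> > 1 \<Longrightarrow> w x = 0"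
    and lower: "\<And>x. \<bar>x\<bar> \<le> 1/2 \<Longrightarrow> w x \<ge> 1/2"
    and decay: "\<exists>C. \<forall>t. norm (fourier w t) \<le> C * exp (- sqrt \<bar>t\<bar>)"
  shows "\<exists>C X0. \<forall>X \<delta> \<theta>. X \<ge> X0 \<longrightarrow> \<delta> \<ge> X powr (-1/10) \<longrightarrow>
            norm (g_sq_hat w X \<theta>) \<ge> \<delta> * X \<longrightarrow>
            (\<exists>q::nat. q > 0 \<and> real q \<le> C * (ln X)^2 * \<delta> powr (-4) \<and>
                dist_Z (real q * \<theta>) \<le> C * (ln X)^2 * \<delta> powr (-4) / X)"
proof -
  obtain L where lip: "L-lipschitz_on {0..1} w"
    using smooth_real_lipschitz_on[OF smooth] by blast
  define K where "K = 2 * (3 * L + 2)"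
  have K: "K \<ge> 4" using lipschitz_on_nonneg[OF lip] by (simp add: K_def)
  show ?thesis
  proof (rule exI[of _ "8192 * K^4"], rule exI[of _ "max 16 ((1024 * K^4) powr 10)"], intro allI impI)
    fix X \<delta> \<theta> :: real
    assume X: "max 16 ((1024 * K^4) powr 10) \<le> X" and \<delta>: "X powr (-1/10) \<le> \<delta>"
      and large: "\<delta> * X \<le> norm (g_sq_hat w X \<theta>)"
    define N where "N = nat \<lfloor>sqrt X\<rfloor>"
    have N: "real N ^ 2 \<le> X" "X < (real N + 1)^2" "sqrt X / 2 \<le> real N" "X \<le> 4 * real N ^ 2"
      using nat_floor_sqrt_bounds[of X] X by (simp_all add: N_def)
    obtain M where "M \<le> N" and weyl: "\<delta> / K * real N \<le> norm (\<Sum>t\<in>{1..M}. e (\<theta> * real t ^ 2))"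
      using large_g_sq_hat_imp_large_weyl_sum[OF lip range01 supp _ N(1,2) large] X by (auto simp: K_def)
    have big: "512 \<le> (\<delta> / K)^4 * real N"
      using rescaled_delta_pow4_mul_ge[OF _ _ \<delta> N(3)] K X by simp
    have "0 < X powr (-1/10)" using X by simp
    then have "0 < \<delta>" using \<delta> by linarith
    moreover have "0 < sqrt X" using X by simp
    then have "0 < real N" using N(3) by linarith
    then have "\<delta> / K \<le> 1"
      using large_sum_e_bounds(2)[OF \<open>M \<le> N\<close> _ weyl] \<open>0 < \<delta>\<close> K by simp
    then have "\<delta> \<le> K" using K by (simp add: divide_le_eq)
    moreover obtain q :: nat where "q > 0" "real q \<le> 32 / (\<delta> / K)^2"
      and "dist_Z (real q * \<theta>) \<le> 2048 / ((\<delta> / K)^4 * real N ^ 2)"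
      using large_quadratic_weyl_sum_imp_dist_Z_small[OF \<open>M \<le> N\<close> _ big weyl] \<open>0 < \<delta>\<close> K by auto
    moreover have "exp 1 \<le> X" using exp_le X by linarith
    ultimately show "\<exists>q::nat. q > 0 \<and> real q \<le> 8192 * K^4 * (ln X)^2 * \<delta> powr (-4) \<and>
        dist_Z (real q * \<theta>) \<le> 8192 * K^4 * (ln X)^2 * \<delta> powr (-4) / X"
      using rescaled_bounds_le[of K \<delta> X N] N(4) K by auto
  qed
qed

end
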